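(* Let $V>0$, $C_0>0$, $A>0$, $0<\delta<1$ with $\delta\neq\frac14$, and $\epsilon$ with $\frac{4\delta}{3\delta+1}\le\epsilon<1$. Let $R\ge2$, and let $E,y:[R,\infty)\to\mathbb R$ be functions with the following properties: 1. $E-y$ is continuous and piecewise differentiable, with $\frac{d(E-y)}{dr}=\frac{y}{r}$ wherever it is differentiable; 2. $|y(r)|\le C_0r^{-1/3}|E(r)|^{4/3}$ for all $r\ge R$; 3. $|E(r)-RV|\le A(r^\delta+R^\epsilon)$ for all $r\ge R$. Then there is a constant $A''$ depending only on $V,C_0,A,\delta,\epsilon$ such that $$|E(r)-RV|\le A''R^\epsilon\qquad\text{for all } r\ge R.$$
   Context: In the paper this is applied with $R=r_k$, $V=\mathrm{Vol}(Y)$, $E=\hat E$ the energy of the min-max generator, and $y=y_2=(\hat{cs}+2\hat e_\mu)/r$, starting from $\delta=\frac{31}{33}$ and $\epsilon=\frac{62}{63}$. *)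

theory Defs
  imports "HOL-Analysis.Analysis"
begin

end

theory Submission
  imports Defs
begin

(*
  The exponent of the a priori bound |E r - R V| <= A (r^delta + R^epsilon) can be lowered:
  inserting it into |y| <= C r^(-1/3) |E|^(4/3) shows that y/r is integrable beyond the radius
  rho = R^(epsilon/delta) with primitive of order R^(4/3) rho^(-1/3) + r^((4 delta - 1)/3), so
  integrating (E - y)' = y/r from rho and using the old bound below rho yields the same estimate
  with delta replaced by (4 delta - 1)/3.  The hypothesis on epsilon makes R^(4/3) rho^(-1/3) at
  most R^epsilon.  Since (4 delta - 1)/3 = delta - (1 - delta)/3, finitely many steps bring the
  exponent below zero, where r^delta <= 1 <= R^epsilon.
*)

lemma abs_diff_le_of_derivative_bound:
  fixes F f G g :: "real \<Rightarrow> real"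
  assumes "a \<le> b"
    and F: "F piecewise_differentiable_on {a..b}"
    and F': "\<And>x. x \<in> {a<..<b} \<Longrightarrow> F differentiable (at x) \<Longrightarrow> (F has_real_derivative f x) (at x)"
    and G': "\<And>x. x \<in> {a..b} \<Longrightarrow> (G has_real_derivative g x) (at x)"
    and f_le_g: "\<And>x. x \<in> {a..b} \<Longrightarrow> \<bar>f x\<bar> \<le> g x"
  shows "\<bar>F b - F a\<bar> \<le> G b - G a"
proof -
  obtain S where "finite S" and S: "\<And>x. x \<in> {a..b} - S \<Longrightarrow> F differentiable (at x within {a..b})"
    using F unfolding piecewise_differentiable_on_def by blast
  have "(F has_vector_derivative f x) (at x)" if x: "x \<in> {a<..<b} - S" for x
  proof -
    have "F differentiable (at x)"
      using S[of x] x at_within_interior[of x "{a..b}"] by auto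
    then show ?thesis
      using F' x has_real_derivative_iff_has_vector_derivative by blast
  qed
  then have intF: "(f has_integral F b - F a) {a..b}"
    using fundamental_theorem_of_calculus_interior_strong[OF \<open>finite S\<close> \<open>a \<le> b\<close>]
      piecewise_differentiable_on_imp_continuous_on[OF F] by blast
  have intG: "(g has_integral G b - G a) {a..b}"
    using fundamental_theorem_of_calculus[OF \<open>a \<le> b\<close>] G'
      has_real_derivative_iff_has_vector_derivative has_vector_derivative_at_within by blast
  have "F b - F a \<le> G b - G a"
    using has_integral_le[OF intF intG] f_le_g by (meson abs_le_D1)
  moreover have "- (G b - G a) \<le> F b - F a"
    using has_integral_le[OF has_integral_neg[OF intG] intF] f_le_g by (meson abs_le_D2 minus_le_iff)
  ultimately show ?thesis
    by linarith
qed

lemma has_real_derivative_powr_primitive: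
  fixes s c K \<beta> :: real
  assumes "0 < s" "\<beta> \<noteq> 0"
  shows "((\<lambda>t. -3 * c * t powr (-1/3) + K / \<beta> * t powr \<beta>) has_real_derivative
           (c * s powr (-1/3) + K * s powr \<beta>) / s) (at s)"
proof -
  have "s powr (-1/3 - 1) = s powr (-1/3) / s"
    using assms powr_diff[of s "-1/3" 1] by simp
  moreover have "s powr (\<beta> - 1) = s powr \<beta> / s"
    using assms powr_diff[of s \<beta> 1] by simp
  ultimately have "-3 * c * ((-1/3) * s powr (-1/3 - 1)) + K / \<beta> * (\<beta> * s powr (\<beta> - 1))
             = (c * s powr (-1/3) + K * s powr \<beta>) / s"
    using assms by (simp add: field_simps)
  moreover have "((\<lambda>t. -3 * c * t powr (-1/3) + K / \<beta> * t powr \<beta>) has_real_derivative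
      -3 * c * ((-1/3) * s powr (-1/3 - 1)) + K / \<beta> * (\<beta> * s powr (\<beta> - 1))) (at s)"
    using assms by (auto intro!: derivative_eq_intros)
  ultimately show ?thesis
    by simp
qed

lemma abs_diff_le_of_powr_forcing:
  fixes F y :: "real \<Rightarrow> real"
  assumes "0 < a" "a \<le> b" "\<beta> \<noteq> 0" "0 \<le> c" "0 \<le> K"
    and F: "F piecewise_differentiable_on {a..b}"
    and F': "\<And>x. x \<in> {a<..<b} \<Longrightarrow> F differentiable (at x) \<Longrightarrow> (F has_real_derivative y x / x) (at x)"
    and y_le: "\<And>s. s \<in> {a..b} \<Longrightarrow> \<bar>y s\<bar> \<le> c * s powr (-1/3) + K * s powr \<beta>"
  shows "\<bar>F b - F a\<bar> \<le> 3 * c * a powr (-1/3) + K / \<bar>\<beta>\<bar> * (b powr \<beta> + a powr \<beta>)"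
proof -
  define G where "G t = -3 * c * t powr (-1/3) + K / \<beta> * t powr \<beta>" for t
  have "\<bar>F b - F a\<bar> \<le> G b - G a"
  proof (rule abs_diff_le_of_derivative_bound[OF \<open>a \<le> b\<close> F F'])
    fix s assume s: "s \<in> {a..b}"
    then show "(G has_real_derivative (c * s powr (-1/3) + K * s powr \<beta>) / s) (at s)"
      unfolding G_def using assms has_real_derivative_powr_primitive by auto
    show "\<bar>y s / s\<bar> \<le> (c * s powr (-1/3) + K * s powr \<beta>) / s"
      using s y_le[OF s] assms by (simp add: abs_div divide_right_mono)
  qed
  moreover have "G b - G a = 3 * c * (a powr (-1/3) - b powr (-1/3)) + K / \<beta> * (b powr \<beta> - a powr \<beta>)"
    unfolding G_def by (simp add: algebra_simps)
  moreover have "K / \<beta> * (b powr \<beta> - a powr \<beta>) \<le> K / \<bar>\<beta>\<bar> * (b powr \<beta> + a powr \<beta>)"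
  proof -
    have "K / \<beta> * (b powr \<beta> - a powr \<beta>) \<le> \<bar>K / \<beta>\<bar> * \<bar>b powr \<beta> - a powr \<beta>\<bar>"
      by (metis abs_ge_self abs_mult)
    also have "\<dots> \<le> K / \<bar>\<beta>\<bar> * (b powr \<beta> + a powr \<beta>)"
      using \<open>0 \<le> K\<close> by (intro mult_mono) (auto simp: abs_le_iff)
    finally show ?thesis .
  qed
  moreover have "3 * c * (a powr (-1/3) - b powr (-1/3)) \<le> 3 * c * a powr (-1/3)"
    using \<open>0 \<le> c\<close> by (simp add: algebra_simps)
  ultimately show ?thesis
    by linarith
qed

lemma powr_le_powr_add_one:
  fixes x z \<beta> :: real
  assumes "1 \<le> x" "x \<le> z"
  shows "x powr \<beta> \<le> z powr \<beta> + 1"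
proof (cases "0 \<le> \<beta>")
  case True
  then show ?thesis
    using assms powr_mono2[of \<beta> x z] by simp
next
  case False
  then show ?thesis
    using assms powr_mono[of \<beta> 0 x] by (simp add: add_increasing)
qed

lemma powr_add_le_two_powr:
  fixes a b p :: real
  assumes "0 \<le> a" "0 \<le> b" "0 \<le> p"
  shows "(a + b) powr p \<le> 2 powr p * (a powr p + b powr p)"
proof -
  have "(a + b) powr p \<le> (2 * max a b) powr p"
    using assms by (intro powr_mono2) auto
  also have "\<dots> = 2 powr p * max a b powr p"
    using assms by (simp add: powr_mult)
  also have "max a b powr p \<le> a powr p + b powr p"
    by (simp add: max_def)
  finally show ?thesis
    by simp
qed

lemma forcing_bound:
  fixes s R V A C\<^sub>0 \<delta> \<beta> e y :: real
  assumes "1 \<le> s" "0 \<le> R" "0 \<le> V" "0 \<le> A" "0 \<le> C\<^sub>0" "(4 * \<delta> - 1) / 3 \<le> \<beta>"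
    and y: "\<bar>y\<bar> \<le> C\<^sub>0 * s powr (-1/3) * \<bar>e\<bar> powr (4/3)"
    and e: "\<bar>e - R * V\<bar> \<le> 2 * A * s powr \<delta>"
  shows "\<bar>y\<bar> \<le> C\<^sub>0 * 2 powr (4/3) * V powr (4/3) * R powr (4/3) * s powr (-1/3)
                + C\<^sub>0 * 2 powr (4/3) * (2 * A) powr (4/3) * s powr \<beta>"
proof -
  have "0 \<le> R * V"
    using assms by simp
  then have "\<bar>e\<bar> powr (4/3) \<le> (R * V + 2 * A * s powr \<delta>) powr (4/3)"
    using e by (intro powr_mono2) auto
  also have "\<dots> \<le> 2 powr (4/3) * ((R * V) powr (4/3) + (2 * A * s powr \<delta>) powr (4/3))"
    using assms by (intro powr_add_le_two_powr) auto
  also have "\<dots> = 2 powr (4/3) * (V powr (4/3) * R powr (4/3) + (2 * A) powr (4/3) * s powr (4 * \<delta> / 3))"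
    using assms by (simp add: powr_mult powr_powr mult.commute)
  finally have "\<bar>y\<bar> \<le> C\<^sub>0 * s powr (-1/3) *
      (2 powr (4/3) * (V powr (4/3) * R powr (4/3) + (2 * A) powr (4/3) * s powr (4 * \<delta> / 3)))"
    using y assms by (meson mult_left_mono order_trans powr_ge_zero zero_le_mult_iff)
  also have "\<dots> = C\<^sub>0 * 2 powr (4/3) * V powr (4/3) * R powr (4/3) * s powr (-1/3)
      + C\<^sub>0 * 2 powr (4/3) * (2 * A) powr (4/3) * (s powr (-1/3) * s powr (4 * \<delta> / 3))"
    by (simp add: algebra_simps)
  also have "s powr (-1/3) * s powr (4 * \<delta> / 3) \<le> s powr \<beta>"
    using assms by (auto simp: powr_add[symmetric] diff_divide_distrib intro: powr_mono)
  finally show ?thesis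
    using assms by (simp add: mult_left_mono)
qed

lemma crossover_radius:
  fixes R \<delta> \<epsilon> :: real
  assumes "1 \<le> R" "0 < \<delta>" "\<delta> \<le> 1" "4 * \<delta> / (3 * \<delta> + 1) \<le> \<epsilon>"
  shows "R \<le> R powr (\<epsilon> / \<delta>)"
    and "(R powr (\<epsilon> / \<delta>)) powr \<delta> = R powr \<epsilon>"
    and "R powr (4/3) * (R powr (\<epsilon> / \<delta>)) powr (-1/3) \<le> R powr \<epsilon>"
proof -
  have \<epsilon>: "4 * \<delta> \<le> \<epsilon> * (3 * \<delta> + 1)"
    using assms by (simp add: divide_le_eq)
  have "\<delta> * \<delta> \<le> \<delta>"
    using assms mult_left_mono[of \<delta> 1 \<delta>] by simp
  then have "\<delta> * (3 * \<delta> + 1) \<le> \<epsilon> * (3 * \<delta> + 1)"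
    using \<epsilon> by (simp add: algebra_simps)
  then have "\<delta> \<le> \<epsilon>"
    using assms by (simp add: mult_le_cancel_right)
  then have "R powr 1 \<le> R powr (\<epsilon> / \<delta>)"
    using assms by (intro powr_mono) auto
  then show "R \<le> R powr (\<epsilon> / \<delta>)"
    using assms by simp
  show "(R powr (\<epsilon> / \<delta>)) powr \<delta> = R powr \<epsilon>"
    using assms by (simp add: powr_powr)
  have "4/3 - \<epsilon> / \<delta> / 3 \<le> \<epsilon>"
    using \<epsilon> assms by (simp add: field_simps)
  then have "R powr (4/3 - \<epsilon> / \<delta> / 3) \<le> R powr \<epsilon>"
    using assms by (intro powr_mono) auto
  then show "R powr (4/3) * (R powr (\<epsilon> / \<delta>)) powr (-1/3) \<le> R powr \<epsilon>"
    by (simp add: powr_powr powr_add[symmetric])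
qed

lemma deviation_beyond_crossover:
  fixes E y :: "real \<Rightarrow> real"
  assumes "0 < \<rho>" "\<rho> \<le> r" "\<beta> \<noteq> 0" "0 \<le> c" "0 \<le> A" "0 \<le> K\<^sub>1" "0 \<le> K\<^sub>2" "0 \<le> M"
    and pd: "(\<lambda>s. E s - y s) piecewise_differentiable_on {\<rho>..r}"
    and der: "\<And>x. x \<in> {\<rho><..<r} \<Longrightarrow> (\<lambda>s. E s - y s) differentiable (at x) \<Longrightarrow>
                 ((\<lambda>s. E s - y s) has_real_derivative y x / x) (at x)"
    and y_le: "\<And>s. s \<in> {\<rho>..r} \<Longrightarrow> \<bar>y s\<bar> \<le> c * s powr (-1/3) + K\<^sub>2 * s powr \<beta>"
    and c_\<rho>: "c * \<rho> powr (-1/3) \<le> K\<^sub>1 * M"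
    and \<rho>_\<beta>: "\<rho> powr \<beta> \<le> r powr \<beta> + M"
    and E_\<rho>: "\<bar>E \<rho> - e\<^sub>0\<bar> \<le> 2 * A * M"
  shows "\<bar>E r - e\<^sub>0\<bar> \<le> (2 * A + 5 * K\<^sub>1 + 2 * K\<^sub>2 + 2 * K\<^sub>2 / \<bar>\<beta>\<bar>) * (r powr \<beta> + M)"
proof -
  define Q where "Q = K\<^sub>2 / \<bar>\<beta>\<bar>"
  have "\<bar>(E r - y r) - (E \<rho> - y \<rho>)\<bar> \<le> 3 * c * \<rho> powr (-1/3) + Q * (r powr \<beta> + \<rho> powr \<beta>)"
    unfolding Q_def using abs_diff_le_of_powr_forcing[OF _ _ _ _ _ pd der y_le] assms by simp
  also have "Q * (r powr \<beta> + \<rho> powr \<beta>) \<le> Q * (2 * r powr \<beta> + M)"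
    using \<rho>_\<beta> \<open>0 \<le> K\<^sub>2\<close> unfolding Q_def by (intro mult_left_mono) auto
  finally have \<Delta>: "\<bar>(E r - y r) - (E \<rho> - y \<rho>)\<bar> \<le> 3 * (K\<^sub>1 * M) + Q * (2 * r powr \<beta> + M)"
    using c_\<rho> by linarith
  have "c * r powr (-1/3) \<le> c * \<rho> powr (-1/3)"
    using assms by (intro mult_left_mono powr_mono2') auto
  then have y_r: "\<bar>y r\<bar> \<le> K\<^sub>1 * M + K\<^sub>2 * r powr \<beta>"
    using y_le[of r] c_\<rho> \<open>\<rho> \<le> r\<close> by fastforce
  have "K\<^sub>2 * \<rho> powr \<beta> \<le> K\<^sub>2 * (r powr \<beta> + M)"
    using \<rho>_\<beta> \<open>0 \<le> K\<^sub>2\<close> by (intro mult_left_mono) auto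
  then have y_\<rho>: "\<bar>y \<rho>\<bar> \<le> K\<^sub>1 * M + K\<^sub>2 * (r powr \<beta> + M)"
    using y_le[of \<rho>] c_\<rho> \<open>\<rho> \<le> r\<close> by fastforce
  have "\<bar>E r - e\<^sub>0\<bar> \<le> \<bar>(E r - y r) - (E \<rho> - y \<rho>)\<bar> + \<bar>E \<rho> - e\<^sub>0\<bar> + \<bar>y \<rho>\<bar> + \<bar>y r\<bar>"
    by linarith
  also have "\<dots> \<le> 5 * (K\<^sub>1 * M) + 2 * (K\<^sub>2 * r powr \<beta>) + K\<^sub>2 * M + Q * (2 * r powr \<beta> + M) + 2 * A * M"
    using \<Delta> y_r y_\<rho> E_\<rho> by (simp add: algebra_simps)
  also have "\<dots> \<le> (2 * A + 5 * K\<^sub>1 + 2 * K\<^sub>2 + 2 * Q) * (r powr \<beta> + M)"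
  proof -
    have "0 \<le> Q" 
      unfolding Q_def using \<open>0 \<le> K\<^sub>2\<close> by simp
    then have "0 \<le> (2 * A + 5 * K\<^sub>1) * r powr \<beta> + (K\<^sub>2 + Q) * M"
      using assms by simp
    then show ?thesis
      by (simp add: algebra_simps)
  qed
  finally show ?thesis
    unfolding Q_def by simp
qed

definition energy_hyps :: "real \<Rightarrow> real \<Rightarrow> (real \<Rightarrow> real) \<Rightarrow> (real \<Rightarrow> real) \<Rightarrow> bool" where
  "energy_hyps C\<^sub>0 R E y \<longleftrightarrow> 2 \<le> R \<and>
     (\<forall>b. (\<lambda>s. E s - y s) piecewise_differentiable_on {R..b}) \<and>
     (\<forall>r>R. (\<lambda>s. E s - y s) differentiable (at r) \<longrightarrow>
        ((\<lambda>s. E s - y s) has_real_derivative y r / r) (at r)) \<and>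
     (\<forall>r\<ge>R. \<bar>y r\<bar> \<le> C\<^sub>0 * r powr (-1/3) * \<bar>E r\<bar> powr (4/3))"

definition deviation_bound :: "real \<Rightarrow> real \<Rightarrow> real \<Rightarrow> real \<Rightarrow> real \<Rightarrow> (real \<Rightarrow> real) \<Rightarrow> bool" where
  "deviation_bound V \<epsilon> A \<beta> R E \<longleftrightarrow> (\<forall>r\<ge>R. \<bar>E r - R * V\<bar> \<le> A * (r powr \<beta> + R powr \<epsilon>))"

lemma deviation_le_twice:
  assumes "deviation_bound V \<epsilon> A \<delta> R E" "0 \<le> A" "R \<le> r" "r powr \<delta> \<le> X" "R powr \<epsilon> \<le> X"
  shows "\<bar>E r - R * V\<bar> \<le> 2 * A * X"
proof -
  have "A * (r powr \<delta> + R powr \<epsilon>) \<le> A * (2 * X)"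
    using assms by (intro mult_left_mono) auto
  then show ?thesis
    using assms unfolding deviation_bound_def by fastforce
qed

lemma deviation_bound_improve:
  fixes V C\<^sub>0 A \<delta> \<epsilon> \<beta> R :: real and E y :: "real \<Rightarrow> real"
  assumes "0 \<le> V" "0 \<le> C\<^sub>0" "0 \<le> A" "0 < \<delta>" "\<delta> \<le> 1" "4 * \<delta> / (3 * \<delta> + 1) \<le> \<epsilon>"
    and "\<beta> \<noteq> 0" "(4 * \<delta> - 1) / 3 \<le> \<beta>"
    and hyps: "energy_hyps C\<^sub>0 R E y" and dev: "deviation_bound V \<epsilon> A \<delta> R E"
  defines "K\<^sub>1 \<equiv> C\<^sub>0 * 2 powr (4/3) * V powr (4/3)" and "K\<^sub>2 \<equiv> C\<^sub>0 * 2 powr (4/3) * (2 * A) powr (4/3)"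
  shows "deviation_bound V \<epsilon> (2 * A + 5 * K\<^sub>1 + 2 * K\<^sub>2 + 2 * K\<^sub>2 / \<bar>\<beta>\<bar>) \<beta> R E"
  unfolding deviation_bound_def
proof (intro allI impI)
  fix r assume "R \<le> r"
  have "2 \<le> R" and pd: "\<And>b. (\<lambda>s. E s - y s) piecewise_differentiable_on {R..b}"
    and der: "\<And>r. R < r \<Longrightarrow> (\<lambda>s. E s - y s) differentiable (at r) \<Longrightarrow>
                  ((\<lambda>s. E s - y s) has_real_derivative y r / r) (at r)"
    and y_le: "\<And>r. R \<le> r \<Longrightarrow> \<bar>y r\<bar> \<le> C\<^sub>0 * r powr (-1/3) * \<bar>E r\<bar> powr (4/3)"
    using hyps unfolding energy_hyps_def by auto
  have "0 < 4 * \<delta> / (3 * \<delta> + 1)"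
    using assms by simp
  then have "0 \<le> \<epsilon>"
    using assms by linarith
  then have M: "1 \<le> R powr \<epsilon>"
    using \<open>2 \<le> R\<close> by (simp add: ge_one_powr_ge_zero)
  define \<rho> where "\<rho> = R powr (\<epsilon> / \<delta>)"
  have "R \<le> \<rho>" and \<rho>_\<delta>: "\<rho> powr \<delta> = R powr \<epsilon>" and \<rho>_cross: "R powr (4/3) * \<rho> powr (-1/3) \<le> R powr \<epsilon>"
    unfolding \<rho>_def using crossover_radius \<open>2 \<le> R\<close> assms by auto
  have K: "0 \<le> K\<^sub>1" "0 \<le> K\<^sub>2"
    unfolding K\<^sub>1_def K\<^sub>2_def using assms by auto
  have near: "\<bar>E s - R * V\<bar> \<le> 2 * A * R powr \<epsilon>" if "R \<le> s" "s \<le> \<rho>" for s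
    using deviation_le_twice[OF dev \<open>0 \<le> A\<close>] powr_mono2[of \<delta> s \<rho>] that \<rho>_\<delta> \<open>2 \<le> R\<close> assms
    by simp
  define c where "c = K\<^sub>1 * R powr (4/3)"
  have far_y: "\<bar>y s\<bar> \<le> c * s powr (-1/3) + K\<^sub>2 * s powr \<beta>" if "\<rho> \<le> s" for s
  proof -
    have "R \<le> s" "R powr \<epsilon> \<le> s powr \<delta>"
      using that \<rho>_\<delta> \<open>R \<le> \<rho>\<close> \<open>2 \<le> R\<close> assms powr_mono2[of \<delta> \<rho> s] by auto
    then have "\<bar>E s - R * V\<bar> \<le> 2 * A * s powr \<delta>"
      using deviation_le_twice[OF dev \<open>0 \<le> A\<close>] by simp
    then show ?thesis
      using forcing_bound[OF _ _ _ _ _ _ y_le[OF \<open>R \<le> s\<close>]] \<open>R \<le> s\<close> \<open>2 \<le> R\<close> assms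
      unfolding c_def K\<^sub>1_def K\<^sub>2_def by (simp add: mult.assoc)
  qed
  show "\<bar>E r - R * V\<bar> \<le> (2 * A + 5 * K\<^sub>1 + 2 * K\<^sub>2 + 2 * K\<^sub>2 / \<bar>\<beta>\<bar>) * (r powr \<beta> + R powr \<epsilon>)"
  proof (cases "r \<le> \<rho>")
    case True
    have "2 * A * R powr \<epsilon> \<le> (2 * A + 5 * K\<^sub>1 + 2 * K\<^sub>2 + 2 * K\<^sub>2 / \<bar>\<beta>\<bar>) * (r powr \<beta> + R powr \<epsilon>)"
      using K \<open>0 \<le> A\<close> by (intro mult_mono) auto
    then show ?thesis
      using near[OF \<open>R \<le> r\<close> True] by linarith
  next
    case False
    have pd_\<rho>: "(\<lambda>s. E s - y s) piecewise_differentiable_on {\<rho>..r}"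
      using \<open>R \<le> \<rho>\<close> by (intro piecewise_differentiable_on_subset[OF pd]) auto
    have c_\<rho>: "c * \<rho> powr (-1/3) \<le> K\<^sub>1 * R powr \<epsilon>"
      using \<rho>_cross K unfolding c_def by (metis mult.assoc mult_left_mono)
    have \<rho>_\<beta>: "\<rho> powr \<beta> \<le> r powr \<beta> + R powr \<epsilon>"
      using powr_le_powr_add_one[of \<rho> r \<beta>] \<open>R \<le> \<rho>\<close> \<open>2 \<le> R\<close> False M by simp
    show ?thesis
      by (rule deviation_beyond_crossover[where c = c and E = E and y = y])
        (use pd_\<rho> c_\<rho> \<rho>_\<beta> False \<open>\<beta> \<noteq> 0\<close> K \<open>0 \<le> A\<close> M \<open>R \<le> \<rho>\<close> \<open>2 \<le> R\<close> der far_y near in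
          \<open>auto simp: c_def\<close>)
  qed
qed

definition bootstrap_closes :: "real \<Rightarrow> real \<Rightarrow> real \<Rightarrow> real \<Rightarrow> bool" where
  "bootstrap_closes V C\<^sub>0 \<epsilon> \<beta> \<longleftrightarrow> (\<forall>A\<ge>0. \<exists>A''. \<forall>R E y.
     energy_hyps C\<^sub>0 R E y \<longrightarrow> deviation_bound V \<epsilon> A \<beta> R E \<longrightarrow>
     (\<forall>r\<ge>R. \<bar>E r - R * V\<bar> \<le> A'' * R powr \<epsilon>))"

lemma bootstrap_closes_nonpos:
  assumes "\<beta> \<le> 0" "0 \<le> \<epsilon>"
  shows "bootstrap_closes V C\<^sub>0 \<epsilon> \<beta>"
  unfolding bootstrap_closes_def
proof (intro allI impI exI)
  fix A R r :: real and E y :: "real \<Rightarrow> real"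
  assume "0 \<le> A" "energy_hyps C\<^sub>0 R E y" "deviation_bound V \<epsilon> A \<beta> R E" "R \<le> r"
  then have "2 \<le> R" and E_dev: "\<bar>E r - R * V\<bar> \<le> A * (r powr \<beta> + R powr \<epsilon>)"
    unfolding energy_hyps_def deviation_bound_def by auto
  have "r powr \<beta> \<le> 1"
    using \<open>R \<le> r\<close> \<open>2 \<le> R\<close> assms powr_mono[of \<beta> 0 r] by simp
  moreover have "1 \<le> R powr \<epsilon>"
    using \<open>2 \<le> R\<close> assms by (simp add: ge_one_powr_ge_zero)
  ultimately have "A * (r powr \<beta> + R powr \<epsilon>) \<le> A * (2 * R powr \<epsilon>)"
    using \<open>0 \<le> A\<close> by (intro mult_left_mono) auto
  then show "\<bar>E r - R * V\<bar> \<le> 2 * A * R powr \<epsilon>"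
    using E_dev by simp
qed

lemma bootstrap_closes_step:
  assumes "0 \<le> V" "0 \<le> C\<^sub>0" "0 < \<delta>" "\<delta> \<le> 1" "4 * \<delta> / (3 * \<delta> + 1) \<le> \<epsilon>"
    and "\<beta> \<noteq> 0" "(4 * \<delta> - 1) / 3 \<le> \<beta>" and closes: "bootstrap_closes V C\<^sub>0 \<epsilon> \<beta>"
  shows "bootstrap_closes V C\<^sub>0 \<epsilon> \<delta>"
  unfolding bootstrap_closes_def
proof (intro allI impI)
  fix A :: real
  assume "0 \<le> A"
  define K\<^sub>1 where "K\<^sub>1 = C\<^sub>0 * 2 powr (4/3) * V powr (4/3)"
  define K\<^sub>2 where "K\<^sub>2 = C\<^sub>0 * 2 powr (4/3) * (2 * A) powr (4/3)"
  define A' where "A' = 2 * A + 5 * K\<^sub>1 + 2 * K\<^sub>2 + 2 * K\<^sub>2 / \<bar>\<beta>\<bar>"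
  have "0 \<le> A'"
    unfolding A'_def K\<^sub>1_def K\<^sub>2_def using \<open>0 \<le> A\<close> assms by simp
  then obtain A'' where A'': "\<And>R E y. energy_hyps C\<^sub>0 R E y \<Longrightarrow> deviation_bound V \<epsilon> A' \<beta> R E \<Longrightarrow>
      \<forall>r\<ge>R. \<bar>E r - R * V\<bar> \<le> A'' * R powr \<epsilon>"
    using closes unfolding bootstrap_closes_def by blast
  show "\<exists>A''. \<forall>R E y. energy_hyps C\<^sub>0 R E y \<longrightarrow> deviation_bound V \<epsilon> A \<delta> R E \<longrightarrow>
          (\<forall>r\<ge>R. \<bar>E r - R * V\<bar> \<le> A'' * R powr \<epsilon>)"
    using A'' deviation_bound_improve[OF assms(1,2) \<open>0 \<le> A\<close> assms(3-7)]
    unfolding A'_def K\<^sub>1_def K\<^sub>2_def by blast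
qed

lemma bootstrap_closes_iterate:
  fixes V C\<^sub>0 \<epsilon> \<delta>\<^sub>0 \<delta> c :: real and n :: nat
  assumes "0 \<le> V" "0 \<le> C\<^sub>0" "\<delta>\<^sub>0 < 1" "4 * \<delta>\<^sub>0 / (3 * \<delta>\<^sub>0 + 1) \<le> \<epsilon>"
    and "0 < c" "c \<le> (1 - \<delta>\<^sub>0) / 3" "c \<le> 1/8"
    and "0 < \<delta>" "\<delta> \<le> \<delta>\<^sub>0" "\<delta> < 1/4 + real n * c"
  shows "bootstrap_closes V C\<^sub>0 \<epsilon> \<delta>"
proof -
  have \<epsilon>: "4 * \<delta> / (3 * \<delta> + 1) \<le> \<epsilon>" "0 \<le> \<epsilon>" if "0 < \<delta>" "\<delta> \<le> \<delta>\<^sub>0" for \<delta>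
  proof -
    have "4 * \<delta> * (3 * \<delta>\<^sub>0 + 1) \<le> 4 * \<delta>\<^sub>0 * (3 * \<delta> + 1)"
      using that by (simp add: algebra_simps)
    then have "4 * \<delta> / (3 * \<delta> + 1) \<le> 4 * \<delta>\<^sub>0 / (3 * \<delta>\<^sub>0 + 1)"
      using that by (simp add: divide_simps)
    then show "4 * \<delta> / (3 * \<delta> + 1) \<le> \<epsilon>"
      using assms by linarith
    moreover have "0 \<le> 4 * \<delta> / (3 * \<delta> + 1)"
      using that by simp
    ultimately show "0 \<le> \<epsilon>"
      by linarith
  qed
  have below_quarter: "bootstrap_closes V C\<^sub>0 \<epsilon> \<delta>" if "0 < \<delta>" "\<delta> \<le> \<delta>\<^sub>0" "\<delta> < 1/4" for \<delta>
    using bootstrap_closes_step[OF assms(1,2) \<open>0 < \<delta>\<close> _ \<epsilon>(1), of "(4 * \<delta> - 1) / 3"]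
      bootstrap_closes_nonpos \<epsilon>(2) that assms by auto
  from assms(8-10) show ?thesis
  proof (induction n arbitrary: \<delta>)
    case 0
    then show ?case
      using below_quarter by simp
  next
    case (Suc n)
    show ?case
    proof (cases "\<delta> < 1/4")
      case True
      then show ?thesis
        using below_quarter Suc.prems by blast
    next
      case False
      \<comment> \<open>Cutting off at 1/8 avoids the exponent 0, where the primitive t powr \<beta> / \<beta> breaks down.\<close>
      define \<beta> where "\<beta> = max ((4 * \<delta> - 1) / 3) (1/8)"
      have "\<beta> \<le> \<delta> - c"
        unfolding \<beta>_def using assms False Suc.prems by auto
      then have "bootstrap_closes V C\<^sub>0 \<epsilon> \<beta>"
        using Suc.IH[of \<beta>] Suc.prems assms unfolding \<beta>_def by (auto simp: algebra_simps)
      then show ?thesis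
        using bootstrap_closes_step[OF assms(1,2) \<open>0 < \<delta>\<close> _ \<epsilon>(1), of \<beta>] Suc.prems assms
        unfolding \<beta>_def by auto
    qed
  qed
qed

theorem mainTheorem12:
  fixes V C\<^sub>0 A \<delta> \<epsilon> :: real
  assumes "V > 0" and "C\<^sub>0 > 0" and "A > 0"
    and "0 < \<delta>" and "\<delta> < 1" and "\<delta> \<noteq> 1/4"
    and "4 * \<delta> / (3 * \<delta> + 1) \<le> \<epsilon>" and "\<epsilon> < 1"
  shows "\<exists>A''::real. \<forall>(R::real) (E::real \<Rightarrow> real) (y::real \<Rightarrow> real).
    R \<ge> 2 \<and>
    continuous_on {R..} (\<lambda>s. E s - y s) \<and>
    (\<forall>b. (\<lambda>s. E s - y s) piecewise_differentiable_on {R..b}) \<and>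
    (\<forall>r. r > R \<longrightarrow> (\<lambda>s. E s - y s) differentiable (at r) \<longrightarrow>
        ((\<lambda>s. E s - y s) has_real_derivative y r / r) (at r)) \<and>
    (\<forall>r. r \<ge> R \<longrightarrow> \<bar>y r\<bar> \<le> C\<^sub>0 * r powr (-1/3) * \<bar>E r\<bar> powr (4/3)) \<and>
    (\<forall>r. r \<ge> R \<longrightarrow> \<bar>E r - R * V\<bar> \<le> A * (r powr \<delta> + R powr \<epsilon>))
    \<longrightarrow> (\<forall>r. r \<ge> R \<longrightarrow> \<bar>E r - R * V\<bar> \<le> A'' * R powr \<epsilon>)"
proof -
  define c where "c = min ((1 - \<delta>) / 3) (1/8)"
  have "0 < c" "c \<le> (1 - \<delta>) / 3" "c \<le> 1/8"
    unfolding c_def using assms by (auto simp: min_def)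
  obtain n where "\<delta> < 1/4 + real n * c"
    using reals_Archimedean3[OF \<open>0 < c\<close>] by (metis add.commute diff_less_eq)
  then have "bootstrap_closes V C\<^sub>0 \<epsilon> \<delta>"
    using bootstrap_closes_iterate[of V C\<^sub>0 \<delta> \<epsilon> c \<delta> n] \<open>0 < c\<close> \<open>c \<le> (1 - \<delta>) / 3\<close> \<open>c \<le> 1/8\<close> assms
    by simp
  then obtain A'' where "\<And>R E y. energy_hyps C\<^sub>0 R E y \<Longrightarrow> deviation_bound V \<epsilon> A \<delta> R E \<Longrightarrow>
      \<forall>r\<ge>R. \<bar>E r - R * V\<bar> \<le> A'' * R powr \<epsilon>"
    using \<open>A > 0\<close> unfolding bootstrap_closes_def by fastforce
  then show ?thesis
    unfolding energy_hyps_def deviation_bound_def by blast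
qed

end
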